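(* Let $n\ge 1$, $N=2^n$, and let $U$ be an $n$-qubit unitary, specified by a quantum circuit, with $U\ket{0}_n = \ket{\psi}_n = \sum_{j=0}^{N-1}\psi_j\ket{j}_n$ where $\psi_j\in\mathbb{C}$ and $\sum_j|\psi_j|^2=1$. Then one can construct a $(1, n+3, 0)$-block-encoding $U_A$ of the diagonal matrix $A = \mathrm{diag}(\psi_0,\dots,\psi_{N-1})$ with $O(n)$ circuit depth (in single- and two-qubit gates) and a total of $O(1)$ queries to a controlled-$U$ gate.
   Context: Block-encoding: for an $s$-qubit operator $A$, $\alpha,\epsilon\ge 0$ and $a\in\mathbb{N}$, an $(s+a)$-qubit unitary $V$ is an $(\alpha,a,\epsilon)$-block-encoding of $A$ if $\|A - \alpha(\bra{0}^{\otimes a}\otimes I)V(\ket{0}^{\otimes a}\otimes I)\|\le\epsilon$ (operator norm). *)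

theory Defs
  imports Complex_Main "Jordan_Normal_Form.Matrix"
begin

definition adj :: "complex mat \<Rightarrow> complex mat" where
  "adj A = mat (dim_col A) (dim_row A) (\<lambda>(i,j). cnj (A $$ (j,i)))"

definition unitary_mat :: "nat \<Rightarrow> complex mat \<Rightarrow> bool" where
  "unitary_mat d U \<longleftrightarrow> U \<in> carrier_mat d d \<and> adj U * U = 1\<^sub>m d"

definition vnorm :: "complex vec \<Rightarrow> real" where
  "vnorm v = sqrt (\<Sum>i<dim_vec v. (cmod (v $ i))^2)"

definition opnorm :: "complex mat \<Rightarrow> real" where
  "opnorm M = Sup {vnorm (M *\<^sub>v v) | v. v \<in> carrier_vec (dim_col M) \<and> vnorm v \<le> 1}"

definition diag_of_vec :: "complex vec \<Rightarrow> complex mat" where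
  "diag_of_vec v = mat (dim_vec v) (dim_vec v) (\<lambda>(i,j). if i = j then v $ i else 0)"

text \<open>Basis states of an (a+s)-qubit register are indexed by k < 2^(a+s), the ancilla
  register being the most significant a qubits (tensor order ancilla \<otimes> system).
  Hence (\<langle>0|^a \<otimes> I) V (|0\<rangle>^a \<otimes> I) is the upper-left 2^s x 2^s block of V.\<close>
definition top_block :: "nat \<Rightarrow> complex mat \<Rightarrow> complex mat" where
  "top_block s V = mat (2^s) (2^s) (\<lambda>(i,j). V $$ (i,j))"

definition block_encoding ::
  "nat \<Rightarrow> complex mat \<Rightarrow> real \<Rightarrow> nat \<Rightarrow> real \<Rightarrow> complex mat \<Rightarrow> bool" where
  "block_encoding s A \<alpha> a \<epsilon> V \<longleftrightarrow>
     A \<in> carrier_mat (2^s) (2^s) \<and> unitary_mat (2^(s+a)) V \<and>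
     opnorm (A - complex_of_real \<alpha> \<cdot>\<^sub>m top_block s V) \<le> \<epsilon>"

text \<open>Qubits of an m-qubit register are numbered 0..m-1, qubit 0 being the most
  significant bit of the basis index.\<close>
definition qbit :: "nat \<Rightarrow> nat \<Rightarrow> nat \<Rightarrow> nat" where
  "qbit m k q = (k div 2^(m - 1 - q)) mod 2"

fun sub_index :: "nat \<Rightarrow> nat \<Rightarrow> nat list \<Rightarrow> nat" where
  "sub_index m k [] = 0"
| "sub_index m k (q # qs) = qbit m k q * 2^(length qs) + sub_index m k qs"

text \<open>The m-qubit matrix of a 2^|qs|-dimensional matrix G acting on the qubits qs
  (identity on all other qubits).\<close>
definition embed :: "nat \<Rightarrow> nat list \<Rightarrow> complex mat \<Rightarrow> complex mat" where
  "embed m qs G = mat (2^m) (2^m) (\<lambda>(k,l).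
     if (\<forall>q<m. q \<notin> set qs \<longrightarrow> qbit m k q = qbit m l q)
     then G $$ (sub_index m k qs, sub_index m l qs) else 0)"

text \<open>Controlled version |0\<rangle>\<langle>0| \<otimes> I + |1\<rangle>\<langle>1| \<otimes> U (control = most significant qubit).\<close>
definition ctrl :: "complex mat \<Rightarrow> complex mat" where
  "ctrl U = mat (2 * dim_row U) (2 * dim_row U) (\<lambda>(i,j).
     let d = dim_row U in
     if i < d \<and> j < d then (if i = j then 1 else 0)
     else if d \<le> i \<and> d \<le> j then U $$ (i - d, j - d) else 0)"

text \<open>A gate is either a fixed (U-independent) unitary on the listed qubits, or a query
  to controlled-U (False) / controlled-U-dagger (True); for a query the qubit list is the
  control qubit followed by the n target qubits.\<close>
datatype gate = Fixed "complex mat" "nat list" | Query bool "nat list"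

fun gate_qubits :: "gate \<Rightarrow> nat list" where
  "gate_qubits (Fixed G qs) = qs"
| "gate_qubits (Query b qs) = qs"

fun is_query :: "gate \<Rightarrow> bool" where
  "is_query (Fixed G qs) = False"
| "is_query (Query b qs) = True"

fun wf_gate :: "nat \<Rightarrow> nat \<Rightarrow> gate \<Rightarrow> bool" where
  "wf_gate m n (Fixed G qs) \<longleftrightarrow> distinct qs \<and> set qs \<subseteq> {..<m} \<and>
      length qs \<in> {1, 2} \<and> unitary_mat (2^length qs) G"
| "wf_gate m n (Query b qs) \<longleftrightarrow> distinct qs \<and> set qs \<subseteq> {..<m} \<and> length qs = n + 1"

fun gate_mat :: "nat \<Rightarrow> complex mat \<Rightarrow> gate \<Rightarrow> complex mat" where
  "gate_mat m U (Fixed G qs) = embed m qs G"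
| "gate_mat m U (Query b qs) = embed m qs (ctrl (if b then adj U else U))"

type_synonym layer = "gate list"

definition wf_layer :: "nat \<Rightarrow> nat \<Rightarrow> layer \<Rightarrow> bool" where
  "wf_layer m n L \<longleftrightarrow> (\<forall>g \<in> set L. wf_gate m n g) \<and>
     (\<forall>i < length L. \<forall>j < length L. i \<noteq> j \<longrightarrow>
        set (gate_qubits (L ! i)) \<inter> set (gate_qubits (L ! j)) = {})"

definition layer_mat :: "nat \<Rightarrow> complex mat \<Rightarrow> layer \<Rightarrow> complex mat" where
  "layer_mat m U L = foldr (\<lambda>g M. gate_mat m U g * M) L (1\<^sub>m (2^m))"

text \<open>A circuit is a list of layers, the first layer being applied first.\<close>
type_synonym circuit = "layer list"

definition wf_circuit :: "nat \<Rightarrow> nat \<Rightarrow> circuit \<Rightarrow> bool" where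
  "wf_circuit m n C \<longleftrightarrow> (\<forall>L \<in> set C. wf_layer m n L)"

definition circuit_mat :: "nat \<Rightarrow> complex mat \<Rightarrow> circuit \<Rightarrow> complex mat" where
  "circuit_mat m U C = foldl (\<lambda>M L. layer_mat m U L * M) (1\<^sub>m (2^m)) C"

definition depth :: "circuit \<Rightarrow> nat" where
  "depth C = length C"

definition num_queries :: "circuit \<Rightarrow> nat" where
  "num_queries C = (\<Sum>L \<leftarrow> C. length (filter is_query L))"

end

theory Submission
  imports Defs "Jordan_Normal_Form.Determinant"
begin

(* Flipping the control qubit, querying controlled-U and flipping the control back maps
   |0>|0>|j> (idle ancillas, the register U acts on, system) to sum_k psi_k |0>|k>|j>.
   A cascade of n CNOTs then adds j bitwise onto the register, giving
   sum_k psi_k |0>|k XOR j>|j>, whose component along |0>|0>|i> is psi_j if i = j and 0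
   otherwise: the top-left block is diag(psi). On the level of matrices, every gate except
   the query is a permutation of the computational basis, so each entry of the circuit
   matrix is one explicitly located entry of the embedded controlled-U. *)

section \<open>Unitary matrices and the operator norm\<close>

lemma adj_carrier_mat [simp]: "A \<in> carrier_mat r c \<Longrightarrow> adj A \<in> carrier_mat c r"
  by (simp add: adj_def)

lemma adj_dims [simp]: "dim_row (adj A) = dim_col A" "dim_col (adj A) = dim_row A"
  by (simp_all add: adj_def)

lemma index_adj [simp]: "i < dim_col A \<Longrightarrow> j < dim_row A \<Longrightarrow> adj A $$ (i, j) = cnj (A $$ (j, i))"
  by (simp add: adj_def)

lemma adj_adj [simp]: "adj (adj A) = A"
  by (rule eq_matI) simp_all

lemma index_adj_mult:
  assumes "A \<in> carrier_mat r c" "B \<in> carrier_mat r d" "i < c" "j < d"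
  shows "(adj A * B) $$ (i, j) = (\<Sum>k<r. cnj (A $$ (k, i)) * B $$ (k, j))"
  using assms by (simp add: scalar_prod_def atLeast0LessThan)

lemma adj_mult:
  assumes "A \<in> carrier_mat r n" "B \<in> carrier_mat n c"
  shows "adj (A * B) = adj B * adj A"
  using assms by (intro eq_matI) (auto simp: scalar_prod_def intro!: sum.cong)

lemma unitary_one: "unitary_mat n (1\<^sub>m n)"
  by (auto simp: unitary_mat_def)

lemma unitary_mult:
  assumes "unitary_mat n A" "unitary_mat n B"
  shows "unitary_mat n (A * B)"
proof -
  have A: "A \<in> carrier_mat n n" "adj A * A = 1\<^sub>m n" and B: "B \<in> carrier_mat n n" "adj B * B = 1\<^sub>m n"
    using assms by (auto simp: unitary_mat_def)
  have "adj (A * B) * (A * B) = adj B * (adj A * (A * B))"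
    using A B by (simp add: adj_mult assoc_mult_mat[of _ n n _ n _ n])
  also have "adj A * (A * B) = B"
    using A B by (metis adj_carrier_mat assoc_mult_mat left_mult_one_mat)
  finally show ?thesis
    using A B by (simp add: unitary_mat_def)
qed

lemma unitary_adj:
  assumes "unitary_mat n U"
  shows "unitary_mat n (adj U)"
  using assms mat_mult_left_right_inverse[of "adj U" n U]
  by (simp add: unitary_mat_def)

lemma opnorm_zero_mat: "opnorm (0\<^sub>m r c) = 0"
proof -
  have "vnorm (0\<^sub>m r c *\<^sub>v v) = 0" if "v \<in> carrier_vec c" for v :: "complex vec"
  proof -
    have "0\<^sub>m r c *\<^sub>v v = 0\<^sub>v r"
      using that by (intro eq_vecI) (auto simp: scalar_prod_def)
    then show ?thesis
      by (simp add: vnorm_def)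
  qed
  moreover have "vnorm (0\<^sub>v c) \<le> 1"
    by (simp add: vnorm_def)
  ultimately have "{vnorm (0\<^sub>m r c *\<^sub>v v) | v. v \<in> carrier_vec c \<and> vnorm v \<le> 1} = {0}"
    by (auto intro!: exI[of _ "0\<^sub>v c"])
  then show ?thesis
    by (simp add: opnorm_def)
qed

section \<open>Qubits of a basis index\<close>

lemma qbit_eq_bit: "qbit m k q = of_bool (bit k (m - 1 - q))"
  by (simp add: qbit_def bit_iff_odd mod2_eq_if)

lemma less_power2_iff_bits: "(k::nat) < 2 ^ m \<longleftrightarrow> (\<forall>p. bit k p \<longrightarrow> p < m)"
  by (simp flip: take_bit_nat_eq_self_iff add: bit_eq_iff bit_take_bit_iff) blast

lemma nat_eq_iff_low_bits:
  assumes "(k::nat) < 2 ^ m" "l < 2 ^ m"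
  shows "k = l \<longleftrightarrow> (\<forall>p<m. bit k p = bit l p)"
  using assms by (metis bit_eq_iff less_power2_iff_bits)

lemma bit_mult_power2_add_iff:
  assumes "(i::nat) < 2 ^ s"
  shows "bit (K * 2 ^ s + i) p \<longleftrightarrow> (if p < s then bit i p else bit K (p - s))"
proof -
  have "\<not> bit (push_bit s K) p \<or> \<not> bit i p" for p
    using assms by (auto simp: bit_push_bit_iff less_power2_iff_bits)
  then have "bit (push_bit s K + i) p \<longleftrightarrow> bit (push_bit s K) p \<or> bit i p"
    by (rule bit_disjunctive_add_iff)
  then show ?thesis
    using assms by (auto simp: bit_push_bit_iff less_power2_iff_bits simp flip: push_bit_eq_mult)
qed

lemma flip_bit_eq_add: "\<not> bit (k::nat) p \<Longrightarrow> flip_bit p k = k + 2 ^ p"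
  by (simp add: flip_bit_eq_if set_bit_eq)

lemma sub_index_eq_horner_sum:
  "sub_index m k qs = horner_sum of_bool 2 (rev (map (\<lambda>q. bit k (m - 1 - q)) qs))"
  by (induction qs) (simp_all add: horner_sum_append qbit_eq_bit)

lemma sub_index_less: "sub_index m k qs < 2 ^ length qs"
  using horner_sum_of_bool_2_less by (metis length_map length_rev sub_index_eq_horner_sum)

lemma bit_sub_index_iff:
  "bit (sub_index m k qs) i \<longleftrightarrow> i < length qs \<and> bit k (m - 1 - rev qs ! i)"
  by (auto simp: sub_index_eq_horner_sum bit_horner_sum_bit_iff rev_map)

lemma bit_sub_index_upt_iff:
  assumes "hi \<le> m"
  shows "bit (sub_index m k [lo..<hi]) i \<longleftrightarrow> i < hi - lo \<and> bit k (m - hi + i)"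
  using assms by (auto simp: bit_sub_index_iff rev_nth)

definition agree_outside :: "nat \<Rightarrow> nat list \<Rightarrow> nat \<Rightarrow> nat \<Rightarrow> bool" where
  "agree_outside m qs k l \<longleftrightarrow> (\<forall>q<m. q \<notin> set qs \<longrightarrow> qbit m k q = qbit m l q)"

lemma agree_outside_iff_bits:
  "agree_outside m qs k l \<longleftrightarrow> (\<forall>q<m. q \<notin> set qs \<longrightarrow> bit k (m - 1 - q) = bit l (m - 1 - q))"
  by (simp add: agree_outside_def qbit_eq_bit) blast

lemma agree_outside_iff_bit_positions:
  "agree_outside m qs k l \<longleftrightarrow> (\<forall>p<m. m - 1 - p \<notin> set qs \<longrightarrow> bit k p = bit l p)"
proof -
  have reflect: "(\<forall>q<m. P q) \<longleftrightarrow> (\<forall>p<m. P (m - 1 - p))" for P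
  proof
    show "\<forall>q<m. P q \<Longrightarrow> \<forall>p<m. P (m - 1 - p)"
      by simp
    show "\<forall>p<m. P (m - 1 - p) \<Longrightarrow> \<forall>q<m. P q"
      by (metis diff_diff_cancel diff_less_Suc less_Suc_eq_le Suc_pred' less_nat_zero_code not_gr0)
  qed
  show ?thesis
    unfolding agree_outside_iff_bits
      reflect[where P = "\<lambda>q. q \<notin> set qs \<longrightarrow> bit k (m - 1 - q) = bit l (m - 1 - q)"]
    by (intro all_cong) simp
qed

lemma agree_outside_refl: "agree_outside m qs k k"
  by (simp add: agree_outside_def)

lemma agree_outside_sym: "agree_outside m qs k l \<Longrightarrow> agree_outside m qs l k"
  by (simp add: agree_outside_def)

lemma agree_outside_trans: "agree_outside m qs k l \<Longrightarrow> agree_outside m qs l j \<Longrightarrow> agree_outside m qs k j"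
  by (simp add: agree_outside_def)

lemma sub_index_eq_iff:
  "sub_index m k qs = sub_index m l qs \<longleftrightarrow> (\<forall>q\<in>set qs. bit k (m - 1 - q) = bit l (m - 1 - q))"
proof -
  have "sub_index m k qs = sub_index m l qs \<longleftrightarrow>
      (\<forall>i<length qs. bit k (m - 1 - rev qs ! i) = bit l (m - 1 - rev qs ! i))"
    by (auto simp: bit_eq_iff bit_sub_index_iff)
  also have "\<dots> \<longleftrightarrow> (\<forall>q\<in>set (rev qs). bit k (m - 1 - q) = bit l (m - 1 - q))"
    by (simp only: all_set_conv_all_nth length_rev)
  finally show ?thesis
    by simp
qed

lemma eq_if_agree_outside_sub_index_eq:
  assumes "k < 2 ^ m" "l < 2 ^ m" "agree_outside m qs k l" "sub_index m k qs = sub_index m l qs"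
  shows "k = l"
  unfolding nat_eq_iff_low_bits[OF assms(1,2)]
proof (intro allI impI)
  fix p assume "p < m"
  then have "m - 1 - (m - 1 - p) = p" "m - 1 - p < m" by auto
  then show "bit k p = bit l p"
    using assms(3,4) unfolding agree_outside_iff_bits sub_index_eq_iff by metis
qed

lemma ex_agree_outside_sub_index:
  assumes "distinct qs" "set qs \<subseteq> {..<m}" "a < 2 ^ length qs"
  shows "\<exists>r<2 ^ m. agree_outside m qs r k \<and> sub_index m r qs = a"
  using assms
proof (induction qs arbitrary: a)
  case Nil
  have "agree_outside m [] (take_bit m k) k"
    by (auto simp: agree_outside_iff_bits bit_take_bit_iff)
  then show ?case
    using Nil.prems by (intro exI[of _ "take_bit m k"]) auto
next
  case (Cons q qs)
  let ?L = "2 ^ length qs :: nat" and ?p = "m - 1 - q"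
  obtain r' where r': "r' < 2 ^ m" "agree_outside m qs r' k" "sub_index m r' qs = a mod ?L"
    using Cons.IH[of "a mod ?L"] Cons.prems by auto
  define r where "r = (if a div ?L = 0 then unset_bit ?p r' else set_bit ?p r')"
  have a_div: "a div ?L < 2"
    using Cons.prems(3) by (simp add: less_mult_imp_div_less)
  have q_m: "q < m" and q_qs: "q \<notin> set qs"
    using Cons.prems by auto
  have bit_r: "bit r p \<longleftrightarrow> (if p = ?p then a div ?L \<noteq> 0 else bit r' p)" for p
    by (auto simp: r_def bit_set_bit_iff bit_unset_bit_iff)
  have "m - 1 - q' \<noteq> ?p" if "q' \<in> set qs" for q'
  proof -
    have "q' < m" "q' \<noteq> q"
      using that q_qs Cons.prems(2) by auto
    then show ?thesis
      using q_m by arith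
  qed
  then have "sub_index m r qs = sub_index m r' qs"
    by (simp add: sub_index_eq_iff bit_r)
  moreover have "qbit m r q = a div ?L"
    using a_div by (auto simp: qbit_eq_bit bit_r less_2_cases_iff)
  ultimately have "sub_index m r (q # qs) = a"
    using r'(3) by (simp add: div_mult_mod_eq)
  moreover have "r < 2 ^ m"
    using r'(1) q_m by (auto simp: less_power2_iff_bits bit_r)
  moreover have "agree_outside m (q # qs) r k"
    using r'(2) q_m by (auto simp: agree_outside_iff_bits bit_r)
  ultimately show ?case
    by blast
qed

lemma bij_betw_sub_index:
  assumes "distinct qs" "set qs \<subseteq> {..<m}"
  shows "bij_betw (\<lambda>r. sub_index m r qs) {r. r < 2 ^ m \<and> agree_outside m qs r k} {..<2 ^ length qs}"
proof (rule bij_betw_imageI)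
  show "inj_on (\<lambda>r. sub_index m r qs) {r. r < 2 ^ m \<and> agree_outside m qs r k}"
  proof (rule inj_onI)
    fix r r' assume "r \<in> {r. r < 2 ^ m \<and> agree_outside m qs r k}"
      "r' \<in> {r. r < 2 ^ m \<and> agree_outside m qs r k}" "sub_index m r qs = sub_index m r' qs"
    moreover from this have "agree_outside m qs r r'"
      by (auto intro: agree_outside_trans agree_outside_sym)
    ultimately show "r = r'"
      using eq_if_agree_outside_sub_index_eq by blast
  qed
  show "(\<lambda>r. sub_index m r qs) ` {r. r < 2 ^ m \<and> agree_outside m qs r k} = {..<2 ^ length qs}"
  proof
    show "(\<lambda>r. sub_index m r qs) ` {r. r < 2 ^ m \<and> agree_outside m qs r k} \<subseteq> {..<2 ^ length qs}"
      using sub_index_less by auto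
    show "{..<2 ^ length qs} \<subseteq> (\<lambda>r. sub_index m r qs) ` {r. r < 2 ^ m \<and> agree_outside m qs r k}"
    proof
      fix a :: nat assume "a \<in> {..<2 ^ length qs}"
      then obtain r where "r < 2 ^ m" "agree_outside m qs r k" "sub_index m r qs = a"
        using ex_agree_outside_sub_index[OF assms] by blast
      then show "a \<in> (\<lambda>r. sub_index m r qs) ` {r. r < 2 ^ m \<and> agree_outside m qs r k}"
        by blast
    qed
  qed
qed

section \<open>Gates acting on a list of qubits\<close>

lemma index_embed:
  "k < 2 ^ m \<Longrightarrow> l < 2 ^ m \<Longrightarrow> embed m qs G $$ (k, l) =
     (if agree_outside m qs k l then G $$ (sub_index m k qs, sub_index m l qs) else 0)"
  by (simp add: embed_def agree_outside_def)

lemma embed_carrier_mat: "embed m qs G \<in> carrier_mat (2 ^ m) (2 ^ m)"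
  by (simp add: embed_def)

lemma adj_embed:
  assumes "G \<in> carrier_mat (2 ^ length qs) (2 ^ length qs)"
  shows "adj (embed m qs G) = embed m qs (adj G)"
  using assms sub_index_less
  by (intro eq_matI) (auto simp: index_embed embed_carrier_mat[THEN carrier_matD(1)]
      embed_carrier_mat[THEN carrier_matD(2)] dest: agree_outside_sym)

lemma embed_mult:
  assumes qs: "distinct qs" "set qs \<subseteq> {..<m}"
    and A: "A \<in> carrier_mat (2 ^ length qs) (2 ^ length qs)"
    and B: "B \<in> carrier_mat (2 ^ length qs) (2 ^ length qs)"
  shows "embed m qs A * embed m qs B = embed m qs (A * B)"
proof (rule eq_matI)
  let ?s = "\<lambda>r. sub_index m r qs"
  fix k l assume "k < dim_row (embed m qs (A * B))" "l < dim_col (embed m qs (A * B))"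
  then have kl: "k < 2 ^ m" "l < 2 ^ m"
    by (simp_all add: embed_def)
  have "(embed m qs A * embed m qs B) $$ (k, l) = (\<Sum>r<2 ^ m. embed m qs A $$ (k, r) * embed m qs B $$ (r, l))"
    using kl by (simp add: embed_def scalar_prod_def atLeast0LessThan)
  also have "\<dots> = embed m qs (A * B) $$ (k, l)"
  proof (cases "agree_outside m qs k l")
    case True
    let ?h = "\<lambda>a. A $$ (?s k, a) * B $$ (a, ?s l)"
    have "(\<Sum>r<2 ^ m. embed m qs A $$ (k, r) * embed m qs B $$ (r, l)) =
        (\<Sum>r<2 ^ m. if agree_outside m qs r k then ?h (?s r) else 0)"
      using True kl by (intro sum.cong) (auto simp: index_embed dest: agree_outside_trans agree_outside_sym)
    also have "\<dots> = (\<Sum>r\<in>{r. r < 2 ^ m \<and> agree_outside m qs r k}. ?h (?s r))"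
      by (simp add: sum.If_cases lessThan_def Collect_conj_eq Int_commute)
    also have "\<dots> = (\<Sum>a<2 ^ length qs. ?h a)"
      by (rule sum.reindex_bij_betw[OF bij_betw_sub_index[OF qs]])
    also have "\<dots> = embed m qs (A * B) $$ (k, l)"
      using True kl A B sub_index_less by (simp add: index_embed scalar_prod_def atLeast0LessThan)
    finally show ?thesis .
  next
    case False
    then show ?thesis
      using kl by (auto simp: index_embed intro!: sum.neutral dest: agree_outside_trans)
  qed
  finally show "(embed m qs A * embed m qs B) $$ (k, l) = embed m qs (A * B) $$ (k, l)" .
qed (simp_all add: embed_def)

lemma embed_one: "embed m qs (1\<^sub>m (2 ^ length qs)) = 1\<^sub>m (2 ^ m)"
proof (rule eq_matI)
  fix k l assume "k < dim_row (1\<^sub>m (2 ^ m) :: complex mat)" "l < dim_col (1\<^sub>m (2 ^ m) :: complex mat)"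
  then show "embed m qs (1\<^sub>m (2 ^ length qs)) $$ (k, l) = 1\<^sub>m (2 ^ m) $$ (k, l)"
    using sub_index_less eq_if_agree_outside_sub_index_eq agree_outside_refl by (auto simp: index_embed)
qed (simp_all add: embed_def)

lemma unitary_embed:
  assumes "distinct qs" "set qs \<subseteq> {..<m}" and G: "unitary_mat (2 ^ length qs) G"
  shows "unitary_mat (2 ^ m) (embed m qs G)"
proof -
  have "G \<in> carrier_mat (2 ^ length qs) (2 ^ length qs)" "adj G * G = 1\<^sub>m (2 ^ length qs)"
    using G by (auto simp: unitary_mat_def)
  then have "adj (embed m qs G) * embed m qs G = 1\<^sub>m (2 ^ m)"
    using assms by (simp add: adj_embed embed_mult embed_one)
  then show ?thesis
    by (simp add: unitary_mat_def embed_carrier_mat)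
qed

lemma ctrl_carrier_mat: "U \<in> carrier_mat d d \<Longrightarrow> ctrl U \<in> carrier_mat (2 * d) (2 * d)"
  by (simp add: ctrl_def)

lemma unitary_ctrl:
  assumes U: "unitary_mat d U"
  shows "unitary_mat (2 * d) (ctrl U)"
proof -
  have U_carrier: "U \<in> carrier_mat d d" and U_unitary: "adj U * U = 1\<^sub>m d"
    using U by (auto simp: unitary_mat_def)
  let ?C = "ctrl U"
  have C: "?C $$ (i, j) = (if i < d \<and> j < d then of_bool (i = j)
      else if d \<le> i \<and> d \<le> j then U $$ (i - d, j - d) else 0)" if "i < 2 * d" "j < 2 * d" for i j
    using that U_carrier by (simp add: ctrl_def)
  have "(adj ?C * ?C) $$ (i, j) = 1\<^sub>m (2 * d) $$ (i, j)" if ij: "i < 2 * d" "j < 2 * d" for i j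
  proof -
    let ?f = "\<lambda>r. cnj (?C $$ (r, i)) * ?C $$ (r, j)"
    have "(adj ?C * ?C) $$ (i, j) = (\<Sum>r<2 * d. ?f r)"
      using ij by (intro index_adj_mult[OF ctrl_carrier_mat ctrl_carrier_mat] U_carrier)
    also have "\<dots> = (\<Sum>r<d. ?f r) + (\<Sum>r<d. ?f (r + d))"
      using sum.atLeastLessThan_concat[of 0 d "d + d" ?f] sum.shift_bounds_nat_ivl[of ?f 0 d d]
      by (simp add: atLeast0LessThan mult_2)
    also have "(\<Sum>r<d. ?f r) = (\<Sum>r<d. if r = i then of_bool (i < d \<and> i = j) else 0)"
      using ij by (intro sum.cong) (auto simp: C)
    also have "\<dots> = of_bool (i < d \<and> i = j)"
      by simp
    also have "(\<Sum>r<d. ?f (r + d)) = (if d \<le> i \<and> d \<le> j then (adj U * U) $$ (i - d, j - d) else 0)"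
      using ij by (auto simp: C index_adj_mult[OF U_carrier U_carrier] intro!: sum.neutral)
    finally show ?thesis
      using ij U_unitary by auto
  qed
  then have "adj ?C * ?C = 1\<^sub>m (2 * d)"
    using U_carrier by (intro eq_matI) (simp_all add: ctrl_def)
  then show ?thesis
    using ctrl_carrier_mat[OF U_carrier] by (simp add: unitary_mat_def)
qed

lemma index_embed_upt:
  assumes m: "m = a + w + s" and K: "K < 2 ^ w" "L < 2 ^ w" and i: "i < 2 ^ s" "j < 2 ^ s"
  shows "embed m [a..<a + w] G $$ (K * 2 ^ s + i, L * 2 ^ s + j) = (if i = j then G $$ (K, L) else 0)"
proof -
  have less: "K' * 2 ^ s + i' < 2 ^ m" if "K' < 2 ^ w" "i' < 2 ^ s" for K' i' :: nat
    using that m by (auto simp: less_power2_iff_bits bit_mult_power2_add_iff)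
  have sub_index: "sub_index m (K' * 2 ^ s + i') [a..<a + w] = K'" if "K' < 2 ^ w" "i' < 2 ^ s" for K' i' :: nat
    using that m
    by (intro bit_eqI) (auto simp: bit_sub_index_upt_iff bit_mult_power2_add_iff less_power2_iff_bits)
  have "m - 1 - p \<in> set [a..<a + w] \<longleftrightarrow> s \<le> p \<and> p < w + s" if "p < m" for p
    using that m by auto
  then have "agree_outside m [a..<a + w] (K * 2 ^ s + i) (L * 2 ^ s + j) \<longleftrightarrow>
      (\<forall>p<m. p < s \<or> w + s \<le> p \<longrightarrow> bit (K * 2 ^ s + i) p = bit (L * 2 ^ s + j) p)"
    by (auto simp: agree_outside_iff_bit_positions)
  also have "\<dots> \<longleftrightarrow> (\<forall>p<s. bit i p = bit j p)"
    using m K i by (auto simp: bit_mult_power2_add_iff less_power2_iff_bits)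
  also have "\<dots> \<longleftrightarrow> i = j"
    using i by (simp add: nat_eq_iff_low_bits)
  finally show ?thesis
    using K i by (simp add: index_embed less sub_index)
qed

section \<open>Circuits\<close>

lemma gate_mat_carrier_mat: "gate_mat m U g \<in> carrier_mat (2 ^ m) (2 ^ m)"
  by (cases g) (simp_all add: embed_carrier_mat)

lemma layer_mat_carrier_mat: "layer_mat m U L \<in> carrier_mat (2 ^ m) (2 ^ m)"
  by (induction L) (auto simp: layer_mat_def intro: mult_carrier_mat[OF gate_mat_carrier_mat])

lemma layer_mat_single [simp]: "layer_mat m U [g] = gate_mat m U g"
  using gate_mat_carrier_mat[of m U g] by (simp add: layer_mat_def)

lemma circuit_mat_Nil [simp]: "circuit_mat m U [] = 1\<^sub>m (2 ^ m)"
  by (simp add: circuit_mat_def)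

lemma circuit_mat_snoc: "circuit_mat m U (C @ [L]) = layer_mat m U L * circuit_mat m U C"
  by (simp add: circuit_mat_def)

lemma circuit_mat_carrier_mat: "circuit_mat m U C \<in> carrier_mat (2 ^ m) (2 ^ m)"
  by (induction C rule: rev_induct)
    (simp_all add: circuit_mat_snoc mult_carrier_mat[OF layer_mat_carrier_mat])

lemma circuit_mat_append:
  "circuit_mat m U (C @ D) = circuit_mat m U D * circuit_mat m U C"
proof (induction D rule: rev_induct)
  case Nil
  then show ?case
    using circuit_mat_carrier_mat[of m U C] by simp
next
  case (snoc L D)
  then show ?case
    using circuit_mat_carrier_mat layer_mat_carrier_mat
    by (metis append_assoc circuit_mat_snoc assoc_mult_mat)
qed

lemma unitary_gate_mat:
  assumes "wf_gate m n g" "unitary_mat (2 ^ n) U"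
  shows "unitary_mat (2 ^ m) (gate_mat m U g)"
proof (cases g)
  case (Fixed G qs)
  then show ?thesis
    using assms by (auto intro: unitary_embed)
next
  case (Query b qs)
  have "unitary_mat (2 * 2 ^ n) (ctrl (if b then adj U else U))"
    using assms(2) by (auto intro: unitary_ctrl unitary_adj)
  then show ?thesis
    using assms(1) Query by (auto intro: unitary_embed)
qed

lemma unitary_layer_mat:
  assumes "\<forall>g\<in>set L. wf_gate m n g" "unitary_mat (2 ^ n) U"
  shows "unitary_mat (2 ^ m) (layer_mat m U L)"
  using assms(1)
proof (induction L)
  case Nil
  then show ?case
    by (simp add: layer_mat_def unitary_one)
next
  case (Cons g L)
  then show ?case
    using unitary_mult unitary_gate_mat[OF _ assms(2)] by (simp add: layer_mat_def)
qed

lemma unitary_circuit_mat: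
  assumes "wf_circuit m n C" "unitary_mat (2 ^ n) U"
  shows "unitary_mat (2 ^ m) (circuit_mat m U C)"
  using assms(1)
proof (induction C rule: rev_induct)
  case Nil
  then show ?case
    by (simp add: unitary_one)
next
  case (snoc L C)
  then show ?case
    using unitary_mult unitary_layer_mat[OF _ assms(2)]
    by (auto simp: circuit_mat_snoc wf_circuit_def wf_layer_def)
qed

section \<open>Permutations of the computational basis\<close>

definition perm_mat :: "nat \<Rightarrow> (nat \<Rightarrow> nat) \<Rightarrow> complex mat" where
  "perm_mat N f = mat N N (\<lambda>(k, l). of_bool (l = f k))"

lemma perm_mat_dims [simp]: "dim_row (perm_mat N f) = N" "dim_col (perm_mat N f) = N"
  by (simp_all add: perm_mat_def)

lemma perm_mat_carrier_mat [simp]: "perm_mat N f \<in> carrier_mat N N"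
  by (simp add: carrier_matI)

lemma perm_mat_id: "perm_mat N (\<lambda>k. k) = 1\<^sub>m N"
  by (intro eq_matI) (simp_all add: perm_mat_def)

lemma index_perm_mat_mult:
  assumes "M \<in> carrier_mat N c" "k < N" "f k < N" "j < c"
  shows "(perm_mat N f * M) $$ (k, j) = M $$ (f k, j)"
proof -
  have "(perm_mat N f * M) $$ (k, j) = (\<Sum>r<N. of_bool (r = f k) * M $$ (r, j))"
    using assms by (simp add: perm_mat_def scalar_prod_def atLeast0LessThan)
  also have "\<dots> = (\<Sum>r<N. if r = f k then M $$ (r, j) else 0)"
    by (intro sum.cong) auto
  also have "\<dots> = M $$ (f k, j)"
    using assms(3) by simp
  finally show ?thesis .
qed

lemma index_mult_perm_mat_involution:
  assumes "M \<in> carrier_mat r N" "i < r" "l < N" and f: "\<And>k. k < N \<Longrightarrow> f k < N \<and> f (f k) = k"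
  shows "(M * perm_mat N f) $$ (i, l) = M $$ (i, f l)"
proof -
  have "(M * perm_mat N f) $$ (i, l) = (\<Sum>k<N. M $$ (i, k) * of_bool (l = f k))"
    using assms(1-3) by (simp add: perm_mat_def scalar_prod_def atLeast0LessThan)
  also have "\<dots> = (\<Sum>k<N. if k = f l then M $$ (i, k) else 0)"
  proof (intro sum.cong refl)
    fix k assume "k \<in> {..<N}"
    then have "l = f k \<longleftrightarrow> k = f l"
      using f assms(3) by (metis lessThan_iff)
    then show "M $$ (i, k) * of_bool (l = f k) = (if k = f l then M $$ (i, k) else 0)"
      by simp
  qed
  also have "\<dots> = M $$ (i, f l)"
    using assms(3) f by simp
  finally show ?thesis .
qed

lemma perm_mat_mult:
  assumes "\<And>k. k < N \<Longrightarrow> f k < N"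
  shows "perm_mat N f * perm_mat N g = perm_mat N (g \<circ> f)"
proof (rule eq_matI)
  fix i j assume "i < dim_row (perm_mat N (g \<circ> f))" "j < dim_col (perm_mat N (g \<circ> f))"
  then have "(perm_mat N f * perm_mat N g) $$ (i, j) = perm_mat N g $$ (f i, j)"
    using assms by (intro index_perm_mat_mult) simp_all
  then show "(perm_mat N f * perm_mat N g) $$ (i, j) = perm_mat N (g \<circ> f) $$ (i, j)"
    using assms \<open>i < _\<close> \<open>j < _\<close> by (simp add: perm_mat_def)
qed (simp_all add: perm_mat_def)

lemma unitary_perm_mat_involution:
  assumes f: "\<And>k. k < N \<Longrightarrow> f k < N \<and> f (f k) = k"
  shows "unitary_mat N (perm_mat N f)"
proof -
  have "adj (perm_mat N f) = perm_mat N f"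
  proof (rule eq_matI)
    fix k l assume "k < dim_row (perm_mat N f)" "l < dim_col (perm_mat N f)"
    then have "k = f l \<longleftrightarrow> l = f k"
      using f by (metis perm_mat_dims)
    then show "adj (perm_mat N f) $$ (k, l) = perm_mat N f $$ (k, l)"
      using \<open>k < _\<close> \<open>l < _\<close> by (simp add: perm_mat_def)
  qed simp_all
  moreover have "perm_mat N (f \<circ> f) = perm_mat N (\<lambda>k. k)"
    using f by (intro eq_matI) (simp_all add: perm_mat_def)
  ultimately show ?thesis
    using f by (simp add: unitary_mat_def perm_mat_mult perm_mat_id)
qed

lemma embed_perm_mat:
  assumes "N = 2 ^ length qs"
    and "\<And>k l. k < 2 ^ m \<Longrightarrow> l < 2 ^ m \<Longrightarrow>
      l = F k \<longleftrightarrow> agree_outside m qs k l \<and> sub_index m l qs = f (sub_index m k qs)"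
  shows "embed m qs (perm_mat N f) = perm_mat (2 ^ m) F"
proof (rule eq_matI)
  fix k l assume "k < dim_row (perm_mat (2 ^ m) F)" "l < dim_col (perm_mat (2 ^ m) F)"
  then show "embed m qs (perm_mat N f) $$ (k, l) = perm_mat (2 ^ m) F $$ (k, l)"
    using assms(1) assms(2)[of k l] sub_index_less[of m _ qs] by (simp add: index_embed perm_mat_def)
qed (simp_all add: embed_def perm_mat_def)

definition pauli_X :: "complex mat" where
  "pauli_X = perm_mat 2 (\<lambda>a. 1 - a)"

(* Basis index 2 * control + target: swaps |10> and |11>. *)
definition cnot :: "complex mat" where
  "cnot = perm_mat 4 (\<lambda>a. if a < 2 then a else 5 - a)"

lemma unitary_pauli_X: "unitary_mat 2 pauli_X"
  unfolding pauli_X_def by (rule unitary_perm_mat_involution) auto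

lemma unitary_cnot: "unitary_mat 4 cnot"
  unfolding cnot_def by (rule unitary_perm_mat_involution) auto

lemma embed_pauli_X:
  assumes "p < m"
  shows "embed m [m - 1 - p] pauli_X = perm_mat (2 ^ m) (flip_bit p)"
  unfolding pauli_X_def
proof (rule embed_perm_mat)
  show "2 = (2::nat) ^ length [m - 1 - p]"
    by simp
  fix k l :: nat assume kl: "k < 2 ^ m" "l < 2 ^ m"
  have "flip_bit p k < 2 ^ m"
    using kl(1) assms by (auto simp: less_power2_iff_bits bit_flip_bit_iff)
  then have "l = flip_bit p k \<longleftrightarrow> (\<forall>p'<m. bit l p' = (p = p' \<longleftrightarrow> \<not> bit k p'))"
    using kl(2) by (simp add: nat_eq_iff_low_bits bit_flip_bit_iff)
  also have "\<dots> \<longleftrightarrow> agree_outside m [m - 1 - p] k l \<and> qbit m l (m - 1 - p) = 1 - qbit m k (m - 1 - p)"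
    using assms by (auto simp: agree_outside_iff_bit_positions qbit_eq_bit)
  finally show "l = flip_bit p k \<longleftrightarrow>
      agree_outside m [m - 1 - p] k l \<and> sub_index m l [m - 1 - p] = 1 - sub_index m k [m - 1 - p]"
    by simp
qed

lemma embed_cnot:
  assumes "c < m" "t < m" "c \<noteq> t"
  shows "embed m [m - 1 - c, m - 1 - t] cnot = perm_mat (2 ^ m) (\<lambda>k. if bit k c then flip_bit t k else k)"
  unfolding cnot_def
proof (rule embed_perm_mat)
  let ?qs = "[m - 1 - c, m - 1 - t]"
  show "4 = (2::nat) ^ length ?qs"
    by simp
  fix k l :: nat assume kl: "k < 2 ^ m" "l < 2 ^ m"
  have "(if bit k c then flip_bit t k else k) < 2 ^ m"
    using kl(1) assms by (auto simp: less_power2_iff_bits bit_flip_bit_iff)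
  then have "l = (if bit k c then flip_bit t k else k) \<longleftrightarrow>
      (\<forall>p<m. bit l p = (bit k p \<noteq> (bit k c \<and> p = t)))"
    using kl(2) by (auto simp: nat_eq_iff_low_bits bit_flip_bit_iff)
  also have "\<dots> \<longleftrightarrow> agree_outside m ?qs k l \<and> bit l c = bit k c \<and> bit l t = (bit k t \<noteq> bit k c)"
  proof -
    have "m - 1 - p = m - 1 - q \<longleftrightarrow> p = q" if "p < m" "q < m" for p q
      using that by arith
    then show ?thesis
      using assms by (auto simp: agree_outside_iff_bit_positions)
  qed
  also have "bit l c = bit k c \<and> bit l t = (bit k t \<noteq> bit k c) \<longleftrightarrow>
      sub_index m l ?qs = (\<lambda>a. if a < 2 then a else 5 - a) (sub_index m k ?qs)"
    using assms by (cases "bit k c"; cases "bit k t"; cases "bit l c"; cases "bit l t")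
      (simp_all add: qbit_eq_bit)
  finally show "l = (if bit k c then flip_bit t k else k) \<longleftrightarrow>
      agree_outside m ?qs k l \<and> sub_index m l ?qs = (\<lambda>a. if a < 2 then a else 5 - a) (sub_index m k ?qs)" .
qed

section \<open>The block-encoding circuit\<close>

(* The register has n + (n + 3) qubits: qubits 0 and 1 are idle ancillas, qubit 2 controls
   the query, qubits 3, ..., n + 2 carry the register that U acts on, and the last n qubits
   are the system. Qubit q is bit n + (n + 3) - 1 - q of the basis index, so copy_cnot n p
   adds system bit p onto bit n + p of the register. *)
definition flip_control :: gate where
  "flip_control = Fixed pauli_X [2]"

definition query_gate :: "nat \<Rightarrow> gate" where
  "query_gate n = Query False [2..<n + 3]"

definition copy_cnot :: "nat \<Rightarrow> nat \<Rightarrow> gate" where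
  "copy_cnot n p = Fixed cnot [n + (n + 3) - 1 - p, n + (n + 3) - 1 - (n + p)]"

definition diag_circuit :: "nat \<Rightarrow> circuit" where
  "diag_circuit n = [[flip_control], [query_gate n], [flip_control]] @ map (\<lambda>p. [copy_cnot n p]) [0..<n]"

definition copy_low_bits :: "nat \<Rightarrow> nat \<Rightarrow> nat \<Rightarrow> nat" where
  "copy_low_bits n T k = xor k (push_bit n (take_bit T k))"

lemma wf_diag_circuit: "wf_circuit (n + (n + 3)) n (diag_circuit n)"
  using unitary_pauli_X unitary_cnot
  by (auto simp: wf_circuit_def wf_layer_def diag_circuit_def flip_control_def query_gate_def copy_cnot_def)

lemma depth_diag_circuit: "depth (diag_circuit n) = n + 3"
  by (simp add: depth_def diag_circuit_def)

lemma num_queries_diag_circuit: "num_queries (diag_circuit n) = 1"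
proof -
  have "map (\<lambda>L. length (filter is_query L)) (map (\<lambda>p. [copy_cnot n p]) [0..<n]) = map (\<lambda>p. 0) [0..<n]"
    by (simp add: copy_cnot_def)
  then show ?thesis
    by (simp add: num_queries_def diag_circuit_def flip_control_def query_gate_def)
qed

lemma gate_mat_flip_control: "gate_mat (n + (n + 3)) U flip_control = perm_mat (2 ^ (n + (n + 3))) (flip_bit (2 * n))"
  using embed_pauli_X[of "2 * n" "n + (n + 3)"] by (simp add: flip_control_def)

lemma gate_mat_copy_cnot:
  assumes "p < n"
  shows "gate_mat (n + (n + 3)) U (copy_cnot n p) =
    perm_mat (2 ^ (n + (n + 3))) (\<lambda>k. if bit k p then flip_bit (n + p) k else k)"
  using assms embed_cnot[of p "n + (n + 3)" "n + p"] by (simp add: copy_cnot_def)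

lemma circuit_mat_copy_cnots:
  assumes "T \<le> n"
  shows "circuit_mat (n + (n + 3)) U (map (\<lambda>p. [copy_cnot n p]) [0..<T]) =
    perm_mat (2 ^ (n + (n + 3))) (copy_low_bits n T)"
  using assms
proof (induction T)
  case 0
  have "copy_low_bits n 0 = (\<lambda>k. k)"
    by (auto simp: copy_low_bits_def)
  then show ?case
    by (simp add: perm_mat_id)
next
  case (Suc T)
  let ?m = "n + (n + 3)" and ?cnot = "\<lambda>k. if bit k T then flip_bit (n + T) k else k"
  have range: "?cnot k < 2 ^ ?m" if "k < 2 ^ ?m" for k :: nat
    using that Suc.prems by (auto simp: less_power2_iff_bits bit_flip_bit_iff)
  have "copy_low_bits n T \<circ> ?cnot = copy_low_bits n (Suc T)"
    by (intro ext bit_eqI)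
      (auto simp: copy_low_bits_def bit_simps less_Suc_eq)
  moreover have "gate_mat ?m U (copy_cnot n T) = perm_mat (2 ^ ?m) ?cnot"
    using Suc.prems by (intro gate_mat_copy_cnot) simp
  moreover have "perm_mat (2 ^ ?m) ?cnot * perm_mat (2 ^ ?m) (copy_low_bits n T) =
      perm_mat (2 ^ ?m) (copy_low_bits n T \<circ> ?cnot)"
    using range by (rule perm_mat_mult)
  ultimately show ?case
    using Suc circuit_mat_snoc[of ?m U "map (\<lambda>p. [copy_cnot n p]) [0..<T]" "[copy_cnot n T]"]
    by simp
qed

lemma circuit_mat_diag_circuit:
  "circuit_mat (n + (n + 3)) U (diag_circuit n) =
     perm_mat (2 ^ (n + (n + 3))) (copy_low_bits n n) *
     (perm_mat (2 ^ (n + (n + 3))) (flip_bit (2 * n)) *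
      (gate_mat (n + (n + 3)) U (query_gate n) * perm_mat (2 ^ (n + (n + 3))) (flip_bit (2 * n))))"
proof -
  have "circuit_mat (n + (n + 3)) U [[flip_control], [query_gate n], [flip_control]] =
      perm_mat (2 ^ (n + (n + 3))) (flip_bit (2 * n)) *
      (gate_mat (n + (n + 3)) U (query_gate n) * perm_mat (2 ^ (n + (n + 3))) (flip_bit (2 * n)))"
    using gate_mat_carrier_mat[of "n + (n + 3)" U flip_control] gate_mat_flip_control[of n U]
    by (simp add: circuit_mat_def)
  then show ?thesis
    unfolding diag_circuit_def circuit_mat_append using circuit_mat_copy_cnots[of n n U] by simp
qed

lemma flip_bit_copy_low_bits:
  assumes "i < 2 ^ n"
  shows "flip_bit (2 * n) (copy_low_bits n n i) = (2 ^ n + i) * 2 ^ n + i"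
proof -
  have "copy_low_bits n n i = i * 2 ^ n + i"
    using assms
    by (intro bit_eqI) (auto simp: copy_low_bits_def bit_simps bit_mult_power2_add_iff less_power2_iff_bits)
  moreover have "\<not> bit (i * 2 ^ n + i) (2 * n)"
    using assms by (auto simp: bit_mult_power2_add_iff less_power2_iff_bits)
  ultimately show ?thesis
    by (simp add: flip_bit_eq_add algebra_simps flip: power_add mult_2)
qed

lemma index_circuit_mat_diag_circuit:
  assumes U: "U \<in> carrier_mat (2 ^ n) (2 ^ n)" and ij: "i < 2 ^ n" "j < 2 ^ n"
  shows "circuit_mat (n + (n + 3)) U (diag_circuit n) $$ (i, j) = (if i = j then U $$ (i, 0) else 0)"
proof -
  let ?m = "n + (n + 3)"
  let ?N = "2 ^ ?m :: nat" and ?flip = "flip_bit (2 * n)" and ?copy = "copy_low_bits n n"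
  let ?X = "perm_mat ?N ?flip" and ?Q = "gate_mat ?m U (query_gate n)"
  have flip: "?flip k < ?N \<and> ?flip (?flip k) = k" if "k < ?N" for k
    using that by (auto simp: less_power2_iff_bits bit_flip_bit_iff intro: bit_eqI)
  have Q: "?Q \<in> carrier_mat ?N ?N"
    by (rule gate_mat_carrier_mat)
  have ij_less: "i < ?N" "j < ?N" and copy_less: "?copy i < ?N"
    using ij by (auto simp: copy_low_bits_def bit_simps less_power2_iff_bits)
  have "circuit_mat ?m U (diag_circuit n) $$ (i, j) = (?X * (?Q * ?X)) $$ (?copy i, j)"
    unfolding circuit_mat_diag_circuit
    by (rule index_perm_mat_mult) (use ij_less copy_less Q in auto)
  also have "\<dots> = (?Q * ?X) $$ (?flip (?copy i), j)"
    by (rule index_perm_mat_mult) (use ij_less copy_less flip Q in auto)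
  also have "\<dots> = ?Q $$ (?flip (?copy i), ?flip j)"
    using ij_less copy_less flip by (intro index_mult_perm_mat_involution[OF Q]) auto
  also have "\<dots> = ?Q $$ ((2 ^ n + i) * 2 ^ n + i, 2 ^ n * 2 ^ n + j)"
  proof -
    have "\<not> bit j (2 * n)"
      using ij(2) by (auto simp: less_power2_iff_bits)
    then have "?flip j = 2 ^ n * 2 ^ n + j"
      by (simp add: flip_bit_eq_add flip: power_add mult_2)
    then show ?thesis
      by (simp only: flip_bit_copy_low_bits[OF ij(1)])
  qed
  also have "\<dots> = embed ?m [2..<2 + (n + 1)] (ctrl U) $$ ((2 ^ n + i) * 2 ^ n + i, 2 ^ n * 2 ^ n + j)"
    by (simp add: query_gate_def numeral_3_eq_3)
  also have "\<dots> = (if i = j then ctrl U $$ (2 ^ n + i, 2 ^ n) else 0)"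
    by (rule index_embed_upt) (use ij in auto)
  also have "\<dots> = (if i = j then U $$ (i, 0) else 0)"
    using U ij by (simp add: ctrl_def)
  finally show ?thesis .
qed

lemma block_encoding_diag_circuit:
  assumes U: "unitary_mat (2 ^ n) U"
  shows "block_encoding n (diag_of_vec (col U 0)) 1 (n + 3) 0 (circuit_mat (n + (n + 3)) U (diag_circuit n))"
proof -
  let ?V = "circuit_mat (n + (n + 3)) U (diag_circuit n)" and ?A = "diag_of_vec (col U 0)"
  have U_carrier: "U \<in> carrier_mat (2 ^ n) (2 ^ n)"
    using U by (simp add: unitary_mat_def)
  have "?A - complex_of_real 1 \<cdot>\<^sub>m top_block n ?V = 0\<^sub>m (2 ^ n) (2 ^ n)"
  proof (rule eq_matI)
    fix i j assume "i < dim_row (0\<^sub>m (2 ^ n) (2 ^ n) :: complex mat)" "j < dim_col (0\<^sub>m (2 ^ n) (2 ^ n) :: complex mat)"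
    then show "(?A - complex_of_real 1 \<cdot>\<^sub>m top_block n ?V) $$ (i, j) = 0\<^sub>m (2 ^ n) (2 ^ n) $$ (i, j)"
      using U_carrier index_circuit_mat_diag_circuit[OF U_carrier, of i j]
      by (simp add: diag_of_vec_def top_block_def)
  qed (use U_carrier in \<open>simp_all add: diag_of_vec_def top_block_def\<close>)
  moreover have "unitary_mat (2 ^ (n + (n + 3))) ?V"
    using wf_diag_circuit U by (rule unitary_circuit_mat)
  moreover have "?A \<in> carrier_mat (2 ^ n) (2 ^ n)"
    using U_carrier by (simp add: diag_of_vec_def)
  ultimately show ?thesis
    by (simp add: block_encoding_def opnorm_zero_mat)
qed

theorem theorem2:
  shows "\<exists>(c_depth::nat) (c_query::nat). \<forall>n::nat. n \<ge> 1 \<longrightarrow>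
     (\<exists>C. wf_circuit (n + (n + 3)) n C \<and>
          depth C \<le> c_depth * n \<and> num_queries C \<le> c_query \<and>
          (\<forall>U. unitary_mat (2^n) U \<longrightarrow>
             block_encoding n (diag_of_vec (col U 0)) 1 (n + 3) 0
               (circuit_mat (n + (n + 3)) U C)))"
proof (rule exI[of _ 4], rule exI[of _ 1], intro allI impI)
  fix n :: nat assume "n \<ge> 1"
  show "\<exists>C. wf_circuit (n + (n + 3)) n C \<and> depth C \<le> 4 * n \<and> num_queries C \<le> 1 \<and>
      (\<forall>U. unitary_mat (2 ^ n) U \<longrightarrow>
         block_encoding n (diag_of_vec (col U 0)) 1 (n + 3) 0 (circuit_mat (n + (n + 3)) U C))"
  proof (intro exI[of _ "diag_circuit n"] conjI allI impI)
    show "wf_circuit (n + (n + 3)) n (diag_circuit n)"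
      by (rule wf_diag_circuit)
    show "depth (diag_circuit n) \<le> 4 * n"
      using \<open>n \<ge> 1\<close> by (simp add: depth_diag_circuit)
    show "num_queries (diag_circuit n) \<le> 1"
      by (simp add: num_queries_diag_circuit)
    fix U assume "unitary_mat (2 ^ n) U"
    then show "block_encoding n (diag_of_vec (col U 0)) 1 (n + 3) 0 (circuit_mat (n + (n + 3)) U (diag_circuit n))"
      by (rule block_encoding_diag_circuit)
  qed
qed

end
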